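(* Let $H$ be a separable real Hilbert space with complete orthonormal system $(e_k)_{k\ge1}$, $F\subset H$ compact, $\mu$ a probability measure on $F$, and $d,n\in\mathbb{N}$ with $\mathbf{M}_{d,n}(\mu)$ nonsingular. Then for every $h\in H$ and $\delta>0$ such that $\min_{f\in F}|\pi_n(f-h)|\ge\delta$, \[p^\mu_{d,n}(h)\ \ge\ 2^{\frac{\delta}{\delta+\operatorname{diam}F}\,d-3},\] where $\operatorname{diam}F=\max_{f_1,f_2\in F}|f_1-f_2|$.
   Context: $|\cdot|$ is the norm of $H$ and $\pi_n(f)=\sum_{k=1}^n\langle f,e_k\rangle e_k$. $c_0(\mathbb{N})$ is the set of sequences of nonnegative integers with finitely many nonzero entries; for $a\in c_0(\mathbb{N})$, $f^a:=\prod_k\langle f,e_k\rangle^{a_k}$. A polynomial on $H$ is a finite linear combination $p(f)=\sum_a p_a f^a$; its algebraic degree is $\max\{\sum_k a_k: p_a\neq0\}$ and its harmonic degree is $\max\{k: a_k\neq0\text{ for some } a\text{ with } p_a\neq0\}$. $P_{d,n}$ is the space of polynomials of algebraic degree at most $d$ and harmonic degree at most $n$. $\boldsymbol{v}_{d,n}(\cdot)$ is a vector whose entries form a basis of $P_{d,n}$; $\mathbf{M}_{d,n}(\mu)=\int_F \boldsymbol{v}_{d,n}(f)\boldsymbol{v}_{d,n}(f)^T\,d\mu(f)$; the Christoffel–Darboux polynomial is $p^\mu_{d,n}(f)=\boldsymbol{v}_{d,n}(f)^T\mathbf{M}_{d,n}(\mu)^{-1}\boldsymbol{v}_{d,n}(f)$.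 *)

theory Defs
  imports "HOL-Probability.Probability"
begin

definition complete_orthonormal_system :: "(nat \<Rightarrow> 'a::{real_inner,complete_space}) \<Rightarrow> bool" where
  "complete_orthonormal_system e \<longleftrightarrow>
     (\<forall>i\<ge>1. \<forall>j\<ge>1. e i \<bullet> e j = (if i = j then 1 else 0)) \<and>
     closure (span (e ` {1..})) = UNIV"

definition proj_n :: "(nat \<Rightarrow> 'a::real_inner) \<Rightarrow> nat \<Rightarrow> 'a \<Rightarrow> 'a" where
  "proj_n e n f = (\<Sum>k=1..n. (f \<bullet> e k) *\<^sub>R e k)"

definition monom_H :: "(nat \<Rightarrow> 'a::real_inner) \<Rightarrow> (nat \<Rightarrow> nat) \<Rightarrow> 'a \<Rightarrow> real" where
  "monom_H e a f = (\<Prod>k\<in>{k. k \<ge> 1 \<and> a k \<noteq> 0}. (f \<bullet> e k) ^ a k)"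

text \<open>Exponents of algebraic degree \<le> d and harmonic degree \<le> n.\<close>
definition exps :: "nat \<Rightarrow> nat \<Rightarrow> (nat \<Rightarrow> nat) set" where
  "exps d n = {a. (\<forall>k. (k < 1 \<or> k > n) \<longrightarrow> a k = 0) \<and> (\<Sum>k=1..n. a k) \<le> d}"

definition P_dn :: "(nat \<Rightarrow> 'a::real_inner) \<Rightarrow> nat \<Rightarrow> nat \<Rightarrow> ('a \<Rightarrow> real) set" where
  "P_dn e d n = {p. \<exists>c. p = (\<lambda>f. \<Sum>a\<in>exps d n. c a * monom_H e a f)}"

definition is_basis_vec :: "('a \<Rightarrow> real ^ 'i::finite) \<Rightarrow> ('a \<Rightarrow> real) set \<Rightarrow> bool" where
  "is_basis_vec v P \<longleftrightarrow>
     (\<forall>i. (\<lambda>f. v f $ i) \<in> P) \<and>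
     (\<forall>c::'i \<Rightarrow> real. (\<forall>f. (\<Sum>i\<in>UNIV. c i * v f $ i) = 0) \<longrightarrow> (\<forall>i. c i = 0)) \<and>
     (\<forall>p\<in>P. \<exists>c::'i \<Rightarrow> real. p = (\<lambda>f. \<Sum>i\<in>UNIV. c i * v f $ i))"

definition moment_matrix :: "'a measure \<Rightarrow> ('a \<Rightarrow> real ^ 'i::finite) \<Rightarrow> real ^ 'i ^ 'i" where
  "moment_matrix \<mu> v = (\<chi> i j. LINT f|\<mu>. v f $ i * v f $ j)"

definition CD_poly :: "'a measure \<Rightarrow> ('a \<Rightarrow> real ^ 'i::finite) \<Rightarrow> 'a \<Rightarrow> real" where
  "CD_poly \<mu> v h = v h \<bullet> (matrix_inv (moment_matrix \<mu> v) *v v h)"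

end

theory Submission
  imports Defs
begin

(* For every q in P_{d,n} with |q| <= 1 on F = supp mu one has q(h)^2 <= p^mu_{d,n}(h): writing
   M = M_{d,n}(mu) and q = c . v, this is Cauchy-Schwarz for the semi-inner product x . M z, since
   c . M c = int q^2 dmu <= 1 and p^mu_{d,n}(h) = y . M y with M y = v(h).  It therefore suffices
   to find a needle polynomial, bounded by 1 on F but large at h.  With m = min_F |pi_n(f - h)|
   >= delta and D = diam F, the squared distance s(f) = |pi_n(f - h)|^2 has degree 2, vanishes at
   h and takes values in [m^2, (m + D)^2] on F.  Mapping this interval affinely onto [-1, 1] and
   composing with the Chebyshev polynomial T_k, k = d div 2, gives the needle; its value at h is
   T_k((alpha + 1/alpha)/2) = (alpha^k + alpha^-k)/2 with alpha = (2m + D)/D, and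
   alpha >= 1 + m/(m + D) >= 2^(m/(m + D)) gives the bound. *)

section \<open>Polynomials of bounded algebraic and harmonic degree\<close>

lemma exps_iff: "a \<in> exps d n \<longleftrightarrow> (\<forall>k. k \<notin> {1..n} \<longrightarrow> a k = 0) \<and> (\<Sum>k=1..n. a k) \<le> d"
  unfolding exps_def by (auto simp: not_le Suc_le_eq)

lemma exps_finite: "finite (exps d n)"
proof -
  have "exps d n \<subseteq> {a. \<forall>k. (k \<in> {1..n} \<longrightarrow> a k \<in> {..d}) \<and> (k \<notin> {1..n} \<longrightarrow> a k = 0)}"
  proof safe
    fix a k assume a: "a \<in> exps d n" and k: "k \<in> {1..n}"
    have "a k \<le> (\<Sum>j=1..n. a j)" using k by (intro member_le_sum) auto
    with a show "a k \<le> d" by (simp add: exps_iff)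
  qed (simp add: exps_iff)
  moreover have "finite {a. \<forall>k. (k \<in> {1..n} \<longrightarrow> a k \<in> {..d}) \<and> (k \<notin> {1..n} \<longrightarrow> a k = 0)}"
    by (rule finite_set_of_finite_funs) simp_all
  ultimately show ?thesis by (rule finite_subset)
qed

lemma exps_mono: "d \<le> d' \<Longrightarrow> exps d n \<subseteq> exps d' n"
  by (auto simp: exps_iff)

lemma exps_add: "a \<in> exps d n \<Longrightarrow> b \<in> exps d' n \<Longrightarrow> (\<lambda>k. a k + b k) \<in> exps (d + d') n"
  by (auto simp: exps_iff sum.distrib intro: add_mono)

lemma monom_H_eq_prod: "a \<in> exps d n \<Longrightarrow> monom_H e a f = (\<Prod>k=1..n. (f \<bullet> e k) ^ a k)"
  unfolding monom_H_def by (rule prod.mono_neutral_left) (auto simp: exps_iff)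

lemma monom_H_mult:
  assumes "a \<in> exps d n" "b \<in> exps d' n"
  shows "monom_H e a f * monom_H e b f = monom_H e (\<lambda>k. a k + b k) f"
  by (simp add: monom_H_eq_prod[OF assms(1)] monom_H_eq_prod[OF assms(2)]
      monom_H_eq_prod[OF exps_add[OF assms]] power_add prod.distrib)

lemma P_dnE:
  assumes "p \<in> P_dn e d n"
  obtains c where "p = (\<lambda>f. \<Sum>a\<in>exps d n. c a * monom_H e a f)"
  using assms unfolding P_dn_def by blast

lemma P_dn_monom:
  assumes "a \<in> exps d n"
  shows "monom_H e a \<in> P_dn e d n"
  unfolding P_dn_def
proof (intro CollectI exI[of _ "\<lambda>b. of_bool (b = a)"] ext)
  fix f
  have "exps d n \<inter> {b. b = a} = {a}" using assms by blast
  then show "monom_H e a f = (\<Sum>b\<in>exps d n. of_bool (b = a) * monom_H e b f)"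
    by (simp add: exps_finite)
qed

lemma P_dn_coord:
  assumes "k \<in> {1..n}"
  shows "(\<lambda>f. f \<bullet> e k) \<in> P_dn e 1 n"
proof -
  let ?a = "\<lambda>j. if j = k then 1 else 0 :: nat"
  have "?a \<in> exps 1 n" using assms by (auto simp: exps_iff sum.delta)
  moreover have "{j. 1 \<le> j \<and> ?a j \<noteq> 0} = {k}" using assms by auto
  then have "monom_H e ?a = (\<lambda>f. f \<bullet> e k)" unfolding monom_H_def by simp
  ultimately show ?thesis by (metis P_dn_monom)
qed

lemma P_dn_add:
  assumes "p \<in> P_dn e d n" "q \<in> P_dn e d n"
  shows "(\<lambda>f. p f + q f) \<in> P_dn e d n"
proof -
  obtain c where p: "p = (\<lambda>f. \<Sum>a\<in>exps d n. c a * monom_H e a f)" using assms(1) by (rule P_dnE)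
  obtain c' where q: "q = (\<lambda>f. \<Sum>a\<in>exps d n. c' a * monom_H e a f)" using assms(2) by (rule P_dnE)
  show ?thesis
    unfolding P_dn_def p q
    by (intro CollectI exI[of _ "\<lambda>a. c a + c' a"]) (simp add: sum.distrib distrib_right)
qed

lemma P_dn_scale:
  assumes "p \<in> P_dn e d n"
  shows "(\<lambda>f. r * p f) \<in> P_dn e d n"
proof -
  obtain c where p: "p = (\<lambda>f. \<Sum>a\<in>exps d n. c a * monom_H e a f)" using assms by (rule P_dnE)
  show ?thesis
    unfolding P_dn_def p
    by (intro CollectI exI[of _ "\<lambda>a. r * c a"]) (simp add: sum_distrib_left mult.assoc)
qed

lemma P_dn_const: "(\<lambda>f. c) \<in> P_dn e d n"
proof -
  have "(\<lambda>_. 0) \<in> exps d n" by (simp add: exps_iff)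
  from P_dn_scale[OF P_dn_monom[OF this], of c] show ?thesis
    by (simp add: monom_H_def)
qed

lemma P_dn_diff: "p \<in> P_dn e d n \<Longrightarrow> q \<in> P_dn e d n \<Longrightarrow> (\<lambda>f. p f - q f) \<in> P_dn e d n"
  using P_dn_add[of p e d n "\<lambda>f. (-1) * q f"] P_dn_scale[of q e d n "-1"] by simp

lemma P_dn_sum:
  "finite S \<Longrightarrow> (\<And>i. i \<in> S \<Longrightarrow> p i \<in> P_dn e d n) \<Longrightarrow> (\<lambda>f. \<Sum>i\<in>S. p i f) \<in> P_dn e d n"
  by (induction S rule: finite_induct) (auto intro: P_dn_const P_dn_add)

lemma P_dn_mono:
  assumes "d \<le> d'" "p \<in> P_dn e d n"
  shows "p \<in> P_dn e d' n"
proof -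
  obtain c where "p = (\<lambda>f. \<Sum>a\<in>exps d n. c a * monom_H e a f)" using assms(2) by (rule P_dnE)
  also have "\<dots> \<in> P_dn e d' n"
    using exps_mono[OF assms(1)] by (intro P_dn_sum P_dn_scale P_dn_monom exps_finite) auto
  finally show ?thesis .
qed

lemma P_dn_mult:
  assumes "p \<in> P_dn e d n" "q \<in> P_dn e d' n"
  shows "(\<lambda>f. p f * q f) \<in> P_dn e (d + d') n"
proof -
  obtain c where p: "p = (\<lambda>f. \<Sum>a\<in>exps d n. c a * monom_H e a f)" using assms(1) by (rule P_dnE)
  obtain c' where q: "q = (\<lambda>f. \<Sum>b\<in>exps d' n. c' b * monom_H e b f)" using assms(2) by (rule P_dnE)
  have "(\<lambda>f. p f * q f) =
      (\<lambda>f. \<Sum>a\<in>exps d n. \<Sum>b\<in>exps d' n. c a * c' b * monom_H e (\<lambda>k. a k + b k) f)"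
    unfolding p q sum_product
    by (intro ext sum.cong refl) (simp add: monom_H_mult[symmetric] mult_ac)
  also have "\<dots> \<in> P_dn e (d + d') n"
    by (intro P_dn_sum P_dn_scale P_dn_monom exps_add exps_finite)
  finally show ?thesis .
qed

lemma P_dn_continuous: "p \<in> P_dn e d n \<Longrightarrow> continuous_on S p"
  by (elim P_dnE) (simp add: monom_H_def; intro continuous_intros)

section \<open>Chebyshev polynomials\<close>

fun chebyshev :: "nat \<Rightarrow> real \<Rightarrow> real" where
  "chebyshev 0 x = 1"
| "chebyshev (Suc 0) x = x"
| "chebyshev (Suc (Suc k)) x = 2 * x * chebyshev (Suc k) x - chebyshev k x"

lemma chebyshev_cos: "chebyshev k (cos t) = cos (real k * t)"
proof (induction k rule: induct_nat_012)
  case (ge2 k)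
  have "cos (real (Suc (Suc k)) * t) + cos (real k * t) = 2 * cos t * cos (real (Suc k) * t)"
    using cos_add[of "real (Suc k) * t" t] cos_diff[of "real (Suc k) * t" t]
    by (simp add: algebra_simps)
  then show ?case using ge2 by simp
qed simp_all

lemma abs_chebyshev_le_1: "\<bar>x\<bar> \<le> 1 \<Longrightarrow> \<bar>chebyshev k x\<bar> \<le> 1"
  using chebyshev_cos[of k "arccos x"] cos_arccos[of x] by auto

lemma chebyshev_joukowski:
  assumes "\<alpha> \<noteq> 0"
  shows "chebyshev k ((\<alpha> + inverse \<alpha>) / 2) = (\<alpha> ^ k + inverse \<alpha> ^ k) / 2"
proof (induction k rule: induct_nat_012)
  case (ge2 k)
  define \<beta> where "\<beta> = inverse \<alpha>"
  have "\<alpha> * \<beta> = 1" using assms by (simp add: \<beta>_def)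
  then have e: "\<alpha> * \<beta> ^ Suc k = \<beta> ^ k" "\<beta> * \<alpha> ^ Suc k = \<alpha> ^ k"
    by (metis mult.assoc mult_1 power_Suc, metis mult.assoc mult.commute mult_1 power_Suc)
  have "chebyshev (Suc (Suc k)) ((\<alpha> + \<beta>) / 2) = ((\<alpha> + \<beta>) * (\<alpha> ^ Suc k + \<beta> ^ Suc k) - (\<alpha> ^ k + \<beta> ^ k)) / 2"
    using ge2 by (simp add: \<beta>_def field_simps)
  also have "(\<alpha> + \<beta>) * (\<alpha> ^ Suc k + \<beta> ^ Suc k) = \<alpha> * \<alpha> ^ Suc k + \<beta> * \<beta> ^ Suc k + (\<alpha> * \<beta> ^ Suc k + \<beta> * \<alpha> ^ Suc k)"
    by (simp add: algebra_simps)
  also have "\<alpha> * \<beta> ^ Suc k + \<beta> * \<alpha> ^ Suc k = \<alpha> ^ k + \<beta> ^ k"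
    unfolding e by simp
  finally show ?case unfolding \<beta>_def by simp
qed simp_all

lemma P_dn_chebyshev:
  assumes "g \<in> P_dn e 2 n"
  shows "(\<lambda>f. chebyshev k (g f)) \<in> P_dn e (2 * k) n"
proof (induction k rule: induct_nat_012)
  case (ge2 k)
  have "(\<lambda>f. chebyshev k (g f)) \<in> P_dn e (2 + 2 * Suc k) n"
    using ge2(1) by (rule P_dn_mono[rotated]) simp
  then have "(\<lambda>f. 2 * (g f * chebyshev (Suc k) (g f)) - chebyshev k (g f)) \<in> P_dn e (2 + 2 * Suc k) n"
    using ge2(2) by (intro P_dn_diff P_dn_scale P_dn_mult[OF assms])
  then show ?case by (simp add: algebra_simps)
qed (simp_all add: P_dn_const assms)

section \<open>The variational lower bound for the Christoffel--Darboux polynomial\<close>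

lemma psd_form_square_le:
  fixes M :: "real^'n^'n"
  assumes psd: "\<And>x. 0 \<le> x \<bullet> (M *v x)"
    and sym: "\<And>x z. x \<bullet> (M *v z) = z \<bullet> (M *v x)"
    and c: "c \<bullet> (M *v c) \<le> 1"
  shows "(c \<bullet> (M *v y))^2 \<le> y \<bullet> (M *v y)"
proof -
  define B where "B = c \<bullet> (M *v y)"
  have "0 \<le> (B *\<^sub>R c - y) \<bullet> (M *v (B *\<^sub>R c - y))" by (rule psd)
  also have "\<dots> = B^2 * (c \<bullet> (M *v c)) - 2 * B^2 + y \<bullet> (M *v y)"
    using sym[of y c]
    by (simp add: B_def matrix_vector_mult_diff_distrib matrix_vector_mult_scaleR
        inner_diff_left inner_diff_right power2_eq_square algebra_simps)
  also have "\<dots> \<le> B^2 - 2 * B^2 + y \<bullet> (M *v y)"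
    using mult_left_mono[OF c, of "B^2"] by simp
  finally show ?thesis unfolding B_def by simp
qed

lemma inner_mult_inner_eq_sum:
  fixes x z :: "real^'i"
  shows "(x \<bullet> w) * (z \<bullet> w) = (\<Sum>i\<in>UNIV. \<Sum>j\<in>UNIV. x$i * z$j * (w$i * w$j))"
  by (simp add: inner_vec_def sum_product mult_ac)

lemma integrable_inner_mult_inner:
  fixes v :: "'a \<Rightarrow> real^'i"
  assumes "\<And>i j. integrable \<mu> (\<lambda>f. v f $ i * v f $ j)"
  shows "integrable \<mu> (\<lambda>f. (x \<bullet> v f) * (z \<bullet> v f))"
  unfolding inner_mult_inner_eq_sum by (intro Bochner_Integration.integrable_sum integrable_mult_right assms)

lemma moment_matrix_inner:
  fixes v :: "'a \<Rightarrow> real^'i"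
  assumes "\<And>i j. integrable \<mu> (\<lambda>f. v f $ i * v f $ j)"
  shows "x \<bullet> (moment_matrix \<mu> v *v z) = (\<integral>f. (x \<bullet> v f) * (z \<bullet> v f) \<partial>\<mu>)"
proof -
  have "(\<integral>f. (x \<bullet> v f) * (z \<bullet> v f) \<partial>\<mu>) = (\<Sum>i\<in>UNIV. \<Sum>j\<in>UNIV. x$i * z$j * (\<integral>f. v f $ i * v f $ j \<partial>\<mu>))"
    unfolding inner_mult_inner_eq_sum
    by (simp add: Bochner_Integration.integral_sum Bochner_Integration.integrable_sum assms)
  also have "\<dots> = x \<bullet> (moment_matrix \<mu> v *v z)"
    by (simp add: moment_matrix_def matrix_vector_mult_def inner_vec_def sum_distrib_left mult_ac)
  finally show ?thesis by (rule sym)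
qed

lemma CD_poly_ge_inner_square:
  assumes "prob_space \<mu>"
    and integrable: "\<And>i j. integrable \<mu> (\<lambda>f. v f $ i * v f $ j)"
    and invertible: "invertible (moment_matrix \<mu> v)"
    and bounded: "AE f in \<mu>. \<bar>c \<bullet> v f\<bar> \<le> 1"
  shows "(c \<bullet> v h)^2 \<le> CD_poly \<mu> v h"
proof -
  interpret prob_space \<mu> by fact
  define M where "M = moment_matrix \<mu> v"
  define y where "y = matrix_inv M *v v h"
  have "M ** matrix_inv M = mat 1"
    using someI_ex[OF invertible[unfolded invertible_def]] by (simp add: M_def matrix_inv_def)
  then have My: "M *v y = v h" by (simp add: y_def matrix_vector_mul_assoc)
  have quad: "x \<bullet> (M *v z) = (\<integral>f. (x \<bullet> v f) * (z \<bullet> v f) \<partial>\<mu>)" for x z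
    unfolding M_def using integrable by (rule moment_matrix_inner)
  have "c \<bullet> (M *v c) \<le> 1"
    unfolding quad
  proof (rule integral_le_const)
    show "integrable \<mu> (\<lambda>f. (c \<bullet> v f) * (c \<bullet> v f))"
      using integrable by (rule integrable_inner_mult_inner)
    show "AE f in \<mu>. (c \<bullet> v f) * (c \<bullet> v f) \<le> 1"
      using bounded by eventually_elim (metis abs_square_le_1 power2_eq_square)
  qed
  then have "(c \<bullet> (M *v y))^2 \<le> y \<bullet> (M *v y)"
    by (intro psd_form_square_le) (simp_all add: quad mult.commute)
  then show ?thesis
    by (simp add: CD_poly_def My inner_commute flip: M_def y_def)
qed

lemma integrable_continuous_on_compact_space:
  fixes g :: "'a::topological_space \<Rightarrow> real"
  assumes "finite_measure M" and sets: "sets M = sets (restrict_space borel F)"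
    and "compact F" "continuous_on F g"
  shows "integrable M g"
proof -
  have "space M = F"
    using sets_eq_imp_space_eq[OF sets] by (simp add: space_restrict_space)
  moreover obtain B where "\<forall>y\<in>g ` F. norm y \<le> B"
    using compact_imp_bounded[OF compact_continuous_image[OF assms(4,3)]]
    unfolding bounded_iff by blast
  moreover have "g \<in> borel_measurable M"
    using borel_measurable_continuous_on_restrict[OF assms(4)] by (simp add: measurable_cong_sets[OF sets refl])
  ultimately show ?thesis
    by (intro finite_measure.integrable_const_bound[OF assms(1), where B=B]) auto
qed

lemma CD_poly_ge_square:
  assumes "prob_space \<mu>" and sets: "sets \<mu> = sets (restrict_space borel F)" and "compact F"
    and basis: "is_basis_vec v P" and continuous: "\<And>p. p \<in> P \<Longrightarrow> continuous_on F p"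
    and "invertible (moment_matrix \<mu> v)"
    and "q \<in> P" and bounded: "\<And>f. f \<in> F \<Longrightarrow> \<bar>q f\<bar> \<le> 1"
  shows "(q h)^2 \<le> CD_poly \<mu> v h"
proof -
  interpret prob_space \<mu> by fact
  obtain c where "q = (\<lambda>f. \<Sum>i\<in>UNIV. c i * v f $ i)"
    using basis \<open>q \<in> P\<close> unfolding is_basis_vec_def by blast
  then have q: "q f = (\<chi> i. c i) \<bullet> v f" for f by (simp add: inner_vec_def)
  have "continuous_on F (\<lambda>f. v f $ i)" for i
    using basis continuous unfolding is_basis_vec_def by blast
  then have "integrable \<mu> (\<lambda>f. v f $ i * v f $ j)" for i j
    using sets \<open>compact F\<close> finite_measure_axioms
    by (intro integrable_continuous_on_compact_space continuous_on_mult)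
  moreover have "AE f in \<mu>. \<bar>(\<chi> i. c i) \<bullet> v f\<bar> \<le> 1"
    using bounded sets_eq_imp_space_eq[OF sets] by (intro AE_I2) (simp add: q[symmetric] space_restrict_space)
  ultimately show ?thesis
    unfolding q by (intro CD_poly_ge_inner_square[OF \<open>prob_space \<mu>\<close> _ \<open>invertible _\<close>])
qed

section \<open>Projected distance to h\<close>

lemma proj_n_diff: "proj_n e n (x - y) = proj_n e n x - proj_n e n y"
  by (simp add: proj_n_def inner_diff_left scaleR_diff_left sum_subtractf)

lemma norm_proj_n_sq:
  assumes orth: "\<forall>i\<ge>1. \<forall>j\<ge>1. e i \<bullet> e j = (if i = j then 1 else 0)"
  shows "(norm (proj_n e n x))^2 = (\<Sum>k=1..n. (x \<bullet> e k)^2)"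
proof -
  have "(norm (proj_n e n x))^2 = (\<Sum>k=1..n. \<Sum>j=1..n. (x \<bullet> e k) * (x \<bullet> e j) * (e k \<bullet> e j))"
    by (simp add: power2_norm_eq_inner proj_n_def inner_sum_left inner_sum_right
        sum_distrib_left inner_commute mult_ac)
  also have "\<dots> = (\<Sum>k=1..n. \<Sum>j=1..n. if j = k then (x \<bullet> e k)^2 else 0)"
    using orth by (intro sum.cong refl) (auto simp: power2_eq_square)
  also have "\<dots> = (\<Sum>k=1..n. (x \<bullet> e k)^2)"
    by simp
  finally show ?thesis .
qed

lemma norm_proj_n_le:
  assumes orth: "\<forall>i\<ge>1. \<forall>j\<ge>1. e i \<bullet> e j = (if i = j then 1 else 0)"
  shows "norm (proj_n e n x) \<le> norm x"
proof -
  have "(norm (proj_n e n x))^2 = x \<bullet> proj_n e n x"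
    unfolding norm_proj_n_sq[OF orth] by (simp add: proj_n_def inner_sum_right power2_eq_square)
  also have "\<dots> \<le> norm x * norm (proj_n e n x)"
    by (rule norm_cauchy_schwarz)
  finally show ?thesis
    by (cases "proj_n e n x = 0") (simp_all add: power2_eq_square)
qed

lemma lipschitz_norm_proj_n:
  assumes orth: "\<forall>i\<ge>1. \<forall>j\<ge>1. e i \<bullet> e j = (if i = j then 1 else 0)"
  shows "1-lipschitz_on S (\<lambda>f. norm (proj_n e n (f - h)))"
proof (rule lipschitz_onI)
  fix x y
  have "dist (norm (proj_n e n (x - h))) (norm (proj_n e n (y - h)))
      \<le> norm (proj_n e n (x - h) - proj_n e n (y - h))"
    by (simp add: dist_real_def norm_triangle_ineq3)
  also have "proj_n e n (x - h) - proj_n e n (y - h) = proj_n e n (x - y)"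
    by (simp add: proj_n_diff[symmetric])
  also have "norm (proj_n e n (x - y)) \<le> 1 * dist x y"
    using norm_proj_n_le[OF orth] by (simp add: dist_norm)
  finally show "dist (norm (proj_n e n (x - h))) (norm (proj_n e n (y - h))) \<le> 1 * dist x y" .
qed simp

lemma P_dn_norm_proj_sq:
  assumes orth: "\<forall>i\<ge>1. \<forall>j\<ge>1. e i \<bullet> e j = (if i = j then 1 else 0)"
  shows "(\<lambda>f. (norm (proj_n e n (f - h)))^2) \<in> P_dn e 2 n"
proof -
  have "(\<lambda>f. (norm (proj_n e n (f - h)))^2)
      = (\<lambda>f. \<Sum>k\<in>{1..n}. (f \<bullet> e k - h \<bullet> e k) * (f \<bullet> e k - h \<bullet> e k))"
    unfolding norm_proj_n_sq[OF orth] by (simp add: inner_diff_left power2_eq_square)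
  also have "\<dots> \<in> P_dn e (1 + 1) n"
    by (intro P_dn_sum P_dn_mult P_dn_diff P_dn_coord P_dn_const) auto
  finally show ?thesis by (simp only: one_add_one)
qed

lemma lipschitz_argmin_diameter:
  fixes g :: "'a::metric_space \<Rightarrow> real"
  assumes "compact F" "F \<noteq> {}" "1-lipschitz_on F g"
  obtains f0 where "f0 \<in> F" "\<And>f. f \<in> F \<Longrightarrow> g f0 \<le> g f \<and> g f \<le> g f0 + diameter F"
proof -
  obtain f0 where "f0 \<in> F" and min: "\<forall>f\<in>F. g f0 \<le> g f"
    using continuous_attains_inf[OF assms(1,2) lipschitz_on_continuous_on[OF assms(3)]] by blast
  moreover have "g f \<le> g f0 + diameter F" if "f \<in> F" for f
  proof -
    have "g f - g f0 \<le> dist f f0"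
      using lipschitz_onD[OF assms(3) that \<open>f0 \<in> F\<close>] by (simp add: dist_real_def)
    also have "\<dots> \<le> diameter F"
      by (rule diameter_bounded_bound[OF compact_imp_bounded[OF assms(1)] that \<open>f0 \<in> F\<close>])
    finally show ?thesis by simp
  qed
  ultimately show ?thesis using that by blast
qed

section \<open>Needle polynomials\<close>

lemma two_powr_le_one_plus:
  fixes \<rho> :: real
  assumes "0 \<le> \<rho>" "\<rho> \<le> 1"
  shows "2 powr \<rho> \<le> 1 + \<rho>"
proof -
  have "convex_on UNIV (\<lambda>x. exp (ln 2 * x))" by (rule convex_on_exp) simp
  from convex_onD[OF this, of \<rho> 0 1] assms show ?thesis
    by (simp add: powr_def mult.commute)
qed

lemma two_powr_le_chebyshev_growth:
  fixes \<delta> m D :: real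
  assumes "0 < \<delta>" "\<delta> \<le> m" "0 < D"
  shows "2 powr (\<delta> / (\<delta> + D) * real d - 3) \<le> ((2 * m + D) / D) ^ (2 * (d div 2)) / 4"
proof -
  define \<rho> where "\<rho> = m / (m + D)"
  define \<alpha> where "\<alpha> = (2 * m + D) / D"
  define k where "k = 2 * (d div 2)"
  have \<rho>: "0 \<le> \<rho>" "\<rho> \<le> 1" "\<delta> / (\<delta> + D) \<le> \<rho>"
    using assms by (auto simp: \<rho>_def field_simps mult_right_mono)
  have "1 + \<rho> \<le> \<alpha>"
    using assms by (simp add: \<rho>_def \<alpha>_def field_simps)
  then have "2 powr \<rho> \<le> \<alpha>"
    using two_powr_le_one_plus[OF \<rho>(1,2)] by linarith
  have "\<delta> / (\<delta> + D) * real d \<le> \<rho> * real d"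
    using \<rho>(3) by (rule mult_right_mono) simp
  also have "\<dots> \<le> \<rho> * (real k + 1)"
    using \<rho>(1) by (intro mult_left_mono) (simp_all add: k_def)
  also have "\<dots> \<le> \<rho> * real k + 1"
    using \<rho>(2) by (simp add: distrib_left)
  finally have "2 powr (\<delta> / (\<delta> + D) * real d - 3) \<le> 2 powr (\<rho> * real k - 2)"
    by (intro powr_mono) simp_all
  also have "\<dots> = (2 powr \<rho>) powr real k / 4"
    by (simp add: powr_diff powr_powr)
  also have "\<dots> \<le> \<alpha> powr real k / 4"
    using \<open>2 powr \<rho> \<le> \<alpha>\<close> by (simp add: powr_mono2)
  also have "\<dots> = \<alpha> ^ k / 4"
    using assms by (simp add: \<alpha>_def powr_realpow)
  finally show ?thesis unfolding \<alpha>_def k_def .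
qed

lemma squares_ratio_eq_joukowski:
  fixes m D :: real
  assumes "0 < m" "0 < D"
  shows "((m + D)^2 + m^2) / ((m + D)^2 - m^2) = ((2 * m + D) / D + inverse ((2 * m + D) / D)) / 2"
proof -
  have "D \<noteq> 0" "2 * m + D \<noteq> 0" using assms by simp_all
  then have "((2 * m + D) / D + inverse ((2 * m + D) / D)) / 2 = ((2 * m + D)^2 + D^2) / (2 * (D * (2 * m + D)))"
    by (simp add: field_simps power2_eq_square)
  also have "(2 * m + D)^2 + D^2 = 2 * ((m + D)^2 + m^2)"
    by (simp add: power2_eq_square algebra_simps)
  also have "D * (2 * m + D) = (m + D)^2 - m^2"
    by (simp add: power2_eq_square algebra_simps)
  also have "2 * ((m + D)^2 + m^2) / (2 * ((m + D)^2 - m^2)) = ((m + D)^2 + m^2) / ((m + D)^2 - m^2)"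
    by (rule mult_divide_mult_cancel_left) simp
  finally show ?thesis by (rule sym)
qed

lemma chebyshev_needle:
  assumes rP: "(\<lambda>f. (r f)^2) \<in> P_dn e 2 n" and "r h = 0" "0 < m" "0 < D"
    and range: "\<And>f. f \<in> F \<Longrightarrow> m \<le> r f \<and> r f \<le> m + D"
  obtains q where "q \<in> P_dn e d n" "\<And>f. f \<in> F \<Longrightarrow> \<bar>q f\<bar> \<le> 1"
    "((2 * m + D) / D) ^ (2 * (d div 2)) / 4 \<le> (q h)^2"
proof -
  define a b where "a = m^2" and "b = (m + D)^2"
  have "a < b" using \<open>0 < m\<close> \<open>0 < D\<close> by (simp add: a_def b_def power_strict_mono)
  define g where "g f = (b + a - 2 * (r f)^2) / (b - a)" for f
  define \<alpha> where "\<alpha> = (2 * m + D) / D"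
  define k where "k = d div 2"
  define q where "q f = chebyshev k (g f)" for f
  have "g = (\<lambda>f. (b + a) / (b - a) + (- 2 / (b - a)) * (r f)^2)"
    by (simp add: g_def fun_eq_iff diff_divide_distrib)
  also have "\<dots> \<in> P_dn e 2 n"
    by (intro P_dn_add P_dn_const P_dn_scale rP)
  finally have "q \<in> P_dn e d n"
    unfolding q_def by (intro P_dn_mono[OF _ P_dn_chebyshev]) (simp add: k_def)
  moreover have "\<bar>q f\<bar> \<le> 1" if "f \<in> F" for f
  proof -
    have "a \<le> (r f)^2" "(r f)^2 \<le> b"
      using range[OF that] \<open>0 < m\<close> by (auto simp: a_def b_def intro: power_mono)
    then have "\<bar>g f\<bar> \<le> 1"
      using \<open>a < b\<close> by (simp add: g_def abs_le_iff divide_le_eq le_divide_eq)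
    then show ?thesis by (simp add: q_def abs_chebyshev_le_1)
  qed
  moreover have "\<alpha> ^ (2 * k) / 4 \<le> (q h)^2"
  proof -
    have "0 < \<alpha>" using \<open>0 < m\<close> \<open>0 < D\<close> by (simp add: \<alpha>_def)
    have "g h = (\<alpha> + inverse \<alpha>) / 2"
      using squares_ratio_eq_joukowski[OF \<open>0 < m\<close> \<open>0 < D\<close>] \<open>r h = 0\<close> by (simp add: g_def a_def b_def \<alpha>_def)
    then have "q h = (\<alpha> ^ k + inverse \<alpha> ^ k) / 2"
      unfolding q_def by (simp only:) (rule chebyshev_joukowski, use \<open>0 < \<alpha>\<close> in simp)
    then have "\<alpha> ^ k / 2 \<le> q h"
      using \<open>0 < \<alpha>\<close> by simp
    then have "(\<alpha> ^ k / 2)^2 \<le> (q h)^2"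
      using \<open>0 < \<alpha>\<close> by (intro power_mono) simp_all
    then show ?thesis
      by (simp add: power_divide power_mult[symmetric] mult.commute)
  qed
  ultimately show ?thesis using that unfolding \<alpha>_def k_def by blast
qed

lemma polynomial_needle:
  assumes rP: "(\<lambda>f. (r f)^2) \<in> P_dn e 2 n" and "r h = 0" "0 < \<delta>" "\<delta> \<le> m" "0 \<le> D"
    and range: "\<And>f. f \<in> F \<Longrightarrow> m \<le> r f \<and> r f \<le> m + D"
  obtains q where "q \<in> P_dn e d n" "\<And>f. f \<in> F \<Longrightarrow> \<bar>q f\<bar> \<le> 1"
    "2 powr (\<delta> / (\<delta> + D) * real d - 3) \<le> (q h)^2"
proof -
  consider "0 < D" | "D = 0" "d \<le> 1" | "D = 0" "2 \<le> d"
    using \<open>0 \<le> D\<close> by linarith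
  then show ?thesis
  proof cases
    case 1
    from \<open>0 < \<delta>\<close> \<open>\<delta> \<le> m\<close> have "0 < m" by simp
    with chebyshev_needle[OF rP \<open>r h = 0\<close> _ 1 range]
    obtain q where "q \<in> P_dn e d n" "\<And>f. f \<in> F \<Longrightarrow> \<bar>q f\<bar> \<le> 1"
      "((2 * m + D) / D) ^ (2 * (d div 2)) / 4 \<le> (q h)^2"
      by blast
    with two_powr_le_chebyshev_growth[OF \<open>0 < \<delta>\<close> \<open>\<delta> \<le> m\<close> 1] show ?thesis
      using that by (meson order_trans)
  next
    case 2
    then have "2 powr (\<delta> / (\<delta> + D) * real d - 3) \<le> 2 powr 0"
      using \<open>0 < \<delta>\<close> by (intro powr_mono) simp_all
    then show ?thesis by (intro that[of "\<lambda>_. 1"] P_dn_const) simp_all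
  next
    case 3
    \<comment> \<open>Now F lies on the sphere r = m, on which a multiple of 1 - r^2/m^2 vanishes while taking
      an arbitrary value at h.\<close>
    define K where "K = sqrt (2 powr (\<delta> / (\<delta> + D) * real d - 3))"
    have "m \<noteq> 0" using \<open>0 < \<delta>\<close> \<open>\<delta> \<le> m\<close> by simp
    have "(\<lambda>f. K - (K / m^2) * (r f)^2) \<in> P_dn e 2 n"
      by (intro P_dn_diff P_dn_const P_dn_scale rP)
    then have "(\<lambda>f. K - (K / m^2) * (r f)^2) \<in> P_dn e d n"
      using \<open>2 \<le> d\<close> by (rule P_dn_mono[rotated])
    moreover have "K - (K / m^2) * (r f)^2 = 0" if "f \<in> F" for f
    proof -
      have "r f = m" using range[OF that] \<open>D = 0\<close> by simp
      with \<open>m \<noteq> 0\<close> show ?thesis by simp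
    qed
    moreover have "(K - (K / m^2) * (r h)^2)^2 = 2 powr (\<delta> / (\<delta> + D) * real d - 3)"
      using \<open>r h = 0\<close> by (simp add: K_def)
    ultimately show ?thesis using that[of "\<lambda>f. K - (K / m^2) * (r f)^2"] by simp
  qed
qed

theorem lemma5:
  fixes e :: "nat \<Rightarrow> 'a::{real_inner,complete_space}"
    and F :: "'a set" and \<mu> :: "'a measure"
    and d n :: nat and v :: "'a \<Rightarrow> real ^ 'i::finite"
    and h :: 'a and \<delta> :: real
  assumes "complete_orthonormal_system e"
    and "compact F"
    and "prob_space \<mu>" and "sets \<mu> = sets (restrict_space borel F)"
    and "is_basis_vec v (P_dn e d n)"
    and "invertible (moment_matrix \<mu> v)"
    and "\<delta> > 0"
    and "\<forall>f\<in>F. norm (proj_n e n (f - h)) \<ge> \<delta>"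
  shows "CD_poly \<mu> v h \<ge> 2 powr (\<delta> / (\<delta> + diameter F) * real d - 3)"
proof -
  have orth: "\<forall>i\<ge>1. \<forall>j\<ge>1. e i \<bullet> e j = (if i = j then 1 else 0)"
    using assms(1) unfolding complete_orthonormal_system_def by blast
  have "F \<noteq> {}"
    using prob_space.not_empty[OF assms(3)] sets_eq_imp_space_eq[OF assms(4)]
    by (simp add: space_restrict_space)
  define r where "r f = norm (proj_n e n (f - h))" for f
  obtain f0 where "f0 \<in> F" and range: "\<And>f. f \<in> F \<Longrightarrow> r f0 \<le> r f \<and> r f \<le> r f0 + diameter F"
    using lipschitz_argmin_diameter[OF assms(2) \<open>F \<noteq> {}\<close> lipschitz_norm_proj_n[OF orth]]
    unfolding r_def by blast
  have rP: "(\<lambda>f. (r f)^2) \<in> P_dn e 2 n"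
    unfolding r_def by (rule P_dn_norm_proj_sq[OF orth])
  have "r h = 0" by (simp add: r_def proj_n_def)
  have "\<delta> \<le> r f0" using assms(8) \<open>f0 \<in> F\<close> by (simp add: r_def)
  have "0 \<le> diameter F" by (rule diameter_ge_0[OF compact_imp_bounded[OF assms(2)]])
  obtain q where q: "q \<in> P_dn e d n" "\<And>f. f \<in> F \<Longrightarrow> \<bar>q f\<bar> \<le> 1"
      and peak: "2 powr (\<delta> / (\<delta> + diameter F) * real d - 3) \<le> (q h)^2"
    using polynomial_needle[OF rP \<open>r h = 0\<close> assms(7) \<open>\<delta> \<le> r f0\<close> \<open>0 \<le> diameter F\<close> range] by blast
  have "(q h)^2 \<le> CD_poly \<mu> v h"
    by (rule CD_poly_ge_square[OF assms(3,4,2,5) _ assms(6)]) (use P_dn_continuous q in auto)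
  with peak show ?thesis by linarith
qed

end
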